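(* Let $F\in\mathcal{P}$ and let $\varphi$ be a Schwarz-type function with $\|\varphi\|_\infty=R<1$. If $|\arg F(z)|<\frac{\pi}{2}-\arcsin\frac{2R}{1+R^2}$ for all $z\in\mathbb{D}$, then $T_{F,\varphi}(f)\in\mathcal{P}$ for every $f\in\mathcal{P}$.
   Context: $\mathbb{D}$ is the open unit disk. $\mathcal{P}$ is the set of analytic $f$ on $\mathbb{D}$ with $\mathrm{Re}\,f>0$ and $f(0)=1$. A Schwarz-type function is an analytic $\varphi:\mathbb{D}\to\mathbb{D}$ with $\varphi(0)=0$. $\|\varphi\|_\infty=\sup_{z\in\mathbb{D}}|\varphi(z)|$. $\arg$ is the principal branch with values in $(-\pi,\pi]$. $T_{F,\varphi}(f)=F\cdot(f\circ\varphi)$. *)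

theory Defs
  imports "HOL-Complex_Analysis.Complex_Analysis"
begin

abbreviation unit_disk :: "complex set" where "unit_disk \<equiv> ball 0 1"

definition carath_class :: "(complex \<Rightarrow> complex) set" where
  "carath_class = {f. f holomorphic_on unit_disk \<and> (\<forall>z\<in>unit_disk. Re (f z) > 0) \<and> f 0 = 1}"

definition schwarz_type :: "(complex \<Rightarrow> complex) \<Rightarrow> bool" where
  "schwarz_type \<phi> \<longleftrightarrow> \<phi> holomorphic_on unit_disk \<and> \<phi> ` unit_disk \<subseteq> unit_disk \<and> \<phi> 0 = 0"

definition sup_norm_disk :: "(complex \<Rightarrow> complex) \<Rightarrow> real" where
  "sup_norm_disk \<phi> = (SUP z\<in>unit_disk. norm (\<phi> z))"

definition T_op :: "(complex \<Rightarrow> complex) \<Rightarrow> (complex \<Rightarrow> complex) \<Rightarrow> (complex \<Rightarrow> complex) \<Rightarrow> (complex \<Rightarrow> complex)" where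
  "T_op F \<phi> f = (\<lambda>z. F z * f (\<phi> z))"

end

theory Submission
  imports Defs
begin

text \<open>
  The Cayley transform \<open>(f - 1)/(f + 1)\<close> of \<open>f \<in> \<P>\<close> is a self-map of the disk fixing 0, so by
  Schwarz's lemma \<open>|f w - 1| \<le> |w| |f w + 1|\<close>. For \<open>|w| \<le> R\<close> this confines \<open>f w\<close> to an
  Apollonius disk symmetric about the real axis, whose points have argument at most
  \<open>arcsin (2R/(1+R\<^sup>2))\<close>. Hence \<open>|arg F(z)| + |arg f(\<phi>(z))| < \<pi>/2\<close>, and the product has positive
  real part.
\<close>

lemma Re_mult_pos_if_abs_Arg_add_less:
  fixes a b :: complex
  assumes "a \<noteq> 0" "b \<noteq> 0" "\<bar>Arg a\<bar> + \<bar>Arg b\<bar> < pi / 2"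
  shows "Re (a * b) > 0"
proof -
  have "Re (a * b) = Re a * Re b - Im a * Im b" by simp
  also have "\<dots> = norm a * norm b * cos (Arg a + Arg b)"
    using assms(1,2) by (simp add: cos_Arg sin_Arg cos_add algebra_simps)
  finally have "Re (a * b) = norm a * norm b * cos (Arg a + Arg b)" .
  moreover have "cos (Arg a + Arg b) > 0"
    using assms(3) by (intro cos_gt_zero_pi) auto
  ultimately show ?thesis using assms(1,2) by simp
qed

lemma norm_diff_one_less_norm_add_one:
  fixes z :: complex
  assumes "Re z > 0"
  shows "norm (z - 1) < norm (z + 1)"
proof -
  have "(norm (z - 1))\<^sup>2 = (norm (z + 1))\<^sup>2 - 4 * Re z"
    unfolding cmod_power2 by (simp add: power2_eq_square algebra_simps)
  with assms have "(norm (z - 1))\<^sup>2 < (norm (z + 1))\<^sup>2" by simp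
  then show ?thesis by (meson norm_ge_zero power_less_imp_less_base)
qed

lemma Im_bound_if_norm_diff_one_le:
  fixes u :: complex and R :: real
  assumes "0 \<le> R" "R < 1" "norm (u - 1) \<le> R * norm (u + 1)"
  shows "(1 + R\<^sup>2) * \<bar>Im u\<bar> \<le> 2 * R * norm u"
proof -
  define t where "t = 1 - R\<^sup>2"
  define p where "p = 1 + R\<^sup>2"
  have "t > 0" unfolding t_def using assms(1,2) by (simp add: abs_square_less_1)
  have "(norm (u - 1))\<^sup>2 \<le> (R * norm (u + 1))\<^sup>2"
    using assms(3) by (simp add: power_mono)
  then have "(Re u - 1)\<^sup>2 + (Im u)\<^sup>2 \<le> R\<^sup>2 * ((Re u + 1)\<^sup>2 + (Im u)\<^sup>2)"
    by (simp add: cmod_power2 power_mult_distrib)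
  then have disk: "t * (norm u)\<^sup>2 \<le> 2 * p * Re u - t"
    unfolding t_def p_def cmod_power2 by (simp add: power2_eq_square algebra_simps)
  have "t\<^sup>2 * (norm u)\<^sup>2 \<le> t * (2 * p * Re u - t)"
    using mult_left_mono[OF disk, of t] \<open>t > 0\<close> by (simp add: power2_eq_square algebra_simps)
  also have "\<dots> \<le> p\<^sup>2 * (Re u)\<^sup>2"
    using sum_squares_ge_zero[of "p * Re u - t" 0] by (simp add: power2_eq_square algebra_simps)
  finally have "p\<^sup>2 * (Im u)\<^sup>2 \<le> (p\<^sup>2 - t\<^sup>2) * (norm u)\<^sup>2"
    unfolding cmod_power2 by (simp add: algebra_simps)
  also have "p\<^sup>2 - t\<^sup>2 = (2 * R)\<^sup>2"
    unfolding p_def t_def by (simp add: power2_eq_square algebra_simps)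
  finally have "(p * \<bar>Im u\<bar>)\<^sup>2 \<le> (2 * R * norm u)\<^sup>2"
    by (simp add: power_mult_distrib)
  then show ?thesis
    unfolding p_def by (rule power2_le_imp_le) (simp add: assms(1))
qed

lemma abs_Arg_le_arcsin:
  fixes u :: complex and s :: real
  assumes "Re u > 0" "s \<le> 1" "\<bar>Im u\<bar> \<le> s * norm u"
  shows "\<bar>Arg u\<bar> \<le> arcsin s"
proof -
  have "u \<noteq> 0" using assms(1) by auto
  have Arg_small: "\<bar>Arg u\<bar> < pi / 2" using Arg_Re_pos assms(1) by auto
  have "sin \<bar>Arg u\<bar> = \<bar>Im u\<bar> / norm u"
    using sin_Arg[OF \<open>u \<noteq> 0\<close>] Arg_less_0[of u] by (cases "Arg u \<ge> 0") auto
  also have "\<dots> \<le> s"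
    using assms(3) \<open>u \<noteq> 0\<close> by (simp add: divide_le_eq mult.commute)
  finally have "sin \<bar>Arg u\<bar> \<le> s" .
  then have "arcsin (sin \<bar>Arg u\<bar>) \<le> arcsin s"
    using assms(2) Arg_small by (intro arcsin_le_arcsin) (auto intro: order_trans[OF _ sin_ge_zero])
  moreover have "arcsin (sin \<bar>Arg u\<bar>) = \<bar>Arg u\<bar>"
    using Arg_small by (intro arcsin_sin) auto
  ultimately show ?thesis by simp
qed

lemma carath_class_Schwarz_bound:
  assumes f: "f \<in> carath_class" and w: "norm w < 1"
  shows "norm (f w - 1) \<le> norm w * norm (f w + 1)"
proof -
  have hol: "f holomorphic_on unit_disk" and re: "\<And>z. z \<in> unit_disk \<Longrightarrow> Re (f z) > 0"
    and "f 0 = 1" using f by (auto simp: carath_class_def)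
  have nz: "f z + 1 \<noteq> 0" if "z \<in> unit_disk" for z
    using re[OF that] by (auto simp: complex_eq_iff)
  define g where "g z = (f z - 1) / (f z + 1)" for z
  have "g holomorphic_on unit_disk"
    unfolding g_def by (intro holomorphic_intros hol nz) auto
  moreover have "g 0 = 0" by (simp add: g_def \<open>f 0 = 1\<close>)
  moreover have "norm (g z) < 1" if "norm z < 1" for z
  proof -
    have "norm (f z - 1) < norm (f z + 1)"
      using norm_diff_one_less_norm_add_one re that by simp
    then show ?thesis by (simp add: g_def norm_divide divide_less_eq)
  qed
  ultimately have "norm (g w) \<le> norm w"
    using Schwarz_Lemma(1)[of g w] w by simp
  moreover have "norm (f w - 1) = norm (g w) * norm (f w + 1)"
    using nz[of w] w by (simp add: g_def norm_divide)
  ultimately show ?thesis by (simp add: mult_right_mono)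
qed

lemma carath_class_abs_Arg_le:
  assumes "f \<in> carath_class" "norm w \<le> R" "R < 1"
  shows "\<bar>Arg (f w)\<bar> \<le> arcsin (2 * R / (1 + R\<^sup>2))"
proof (rule abs_Arg_le_arcsin)
  have "0 \<le> R" using assms(2) norm_ge_zero order_trans by blast
  have "1 + R\<^sup>2 > 0" by (simp add: add_pos_nonneg)
  show "Re (f w) > 0"
    using assms by (auto simp: carath_class_def)
  have "2 * R \<le> 1 + R\<^sup>2"
    using sum_squares_ge_zero[of "R - 1" 0] by (simp add: power2_eq_square algebra_simps)
  with \<open>1 + R\<^sup>2 > 0\<close> show "2 * R / (1 + R\<^sup>2) \<le> 1" by simp
  have "norm (f w - 1) \<le> norm w * norm (f w + 1)"
    using carath_class_Schwarz_bound assms(1,2,3) by simp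
  also have "\<dots> \<le> R * norm (f w + 1)"
    using assms(2) by (simp add: mult_right_mono)
  finally have "(1 + R\<^sup>2) * \<bar>Im (f w)\<bar> \<le> 2 * R * norm (f w)"
    by (rule Im_bound_if_norm_diff_one_le[OF \<open>0 \<le> R\<close> assms(3)])
  with \<open>1 + R\<^sup>2 > 0\<close> show "\<bar>Im (f w)\<bar> \<le> 2 * R / (1 + R\<^sup>2) * norm (f w)"
    by (simp add: field_simps)
qed

lemma norm_le_sup_norm_disk:
  assumes "schwarz_type \<phi>" "z \<in> unit_disk"
  shows "norm (\<phi> z) \<le> sup_norm_disk \<phi>"
proof -
  have "bdd_above ((\<lambda>z. norm (\<phi> z)) ` unit_disk)"
    using assms(1) by (intro bdd_aboveI[of _ 1]) (auto simp: schwarz_type_def less_imp_le)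
  then show ?thesis
    unfolding sup_norm_disk_def using assms(2) by (rule cSUP_upper2) simp
qed

theorem proposition3p4:
  fixes F \<phi> :: "complex \<Rightarrow> complex" and R :: real
  assumes "F \<in> carath_class"
    and "schwarz_type \<phi>"
    and "sup_norm_disk \<phi> = R" and "R < 1"
    and "\<forall>z\<in>unit_disk. \<bar>Arg (F z)\<bar> < pi / 2 - arcsin (2 * R / (1 + R\<^sup>2))"
  shows "\<forall>f\<in>carath_class. T_op F \<phi> f \<in> carath_class"
proof
  fix f assume f: "f \<in> carath_class"
  have \<phi>_maps: "\<phi> ` unit_disk \<subseteq> unit_disk" using assms(2) by (simp add: schwarz_type_def)
  have "(\<lambda>z. F z * f (\<phi> z)) holomorphic_on unit_disk"
    using assms(1,2) f holomorphic_on_compose_gen[OF _ _ \<phi>_maps, of f]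
    by (auto simp: carath_class_def schwarz_type_def o_def intro!: holomorphic_intros)
  moreover have "Re (F z * f (\<phi> z)) > 0" if z: "z \<in> unit_disk" for z
  proof (rule Re_mult_pos_if_abs_Arg_add_less)
    have "\<phi> z \<in> unit_disk" using \<phi>_maps z by blast
    then have "Re (F z) > 0" "Re (f (\<phi> z)) > 0"
      using z assms(1) f by (auto simp: carath_class_def)
    then show "F z \<noteq> 0" "f (\<phi> z) \<noteq> 0" by auto
    have "\<bar>Arg (f (\<phi> z))\<bar> \<le> arcsin (2 * R / (1 + R\<^sup>2))"
      using carath_class_abs_Arg_le f norm_le_sup_norm_disk[OF assms(2) z] assms(3,4) by simp
    then show "\<bar>Arg (F z)\<bar> + \<bar>Arg (f (\<phi> z))\<bar> < pi / 2"
      using assms(5) z by fastforce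
  qed
  moreover have "F 0 * f (\<phi> 0) = 1"
    using assms(1,2) f by (simp add: carath_class_def schwarz_type_def)
  ultimately show "T_op F \<phi> f \<in> carath_class"
    by (simp add: carath_class_def T_op_def)
qed

end
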